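(* Let $G$ be a non-discrete LCA group with dual $\Gamma$ and $V$ an open neighbourhood of $0\in\Gamma$ with compact closure $\bar V$. Then $\|\rho*\phi\|^{\bar V}\le\|\phi\|^{\bar V}\|\rho\|$ for all $\phi\in C^{\bar V}_{BSE}(\Gamma)$ and $\rho\in M(\Gamma)$.
   Context: $(x,\gamma)=\gamma(x)$. For $E\subseteq\Gamma$, $\mathrm{span}(E)$ is the span of the characters in $E$ as functions on $G$, each $p=\sum\hat p(\gamma)\gamma$ uniquely, $\|p\|_\infty=\sup_G|p|$. For $\phi\in C_b(\Gamma)$: $\|\phi\|^{\bar V,\gamma}=\sup\{|\sum_{\gamma'\in\bar V+\gamma}\hat p(\gamma')\phi(\gamma')|:p\in\mathrm{span}(\bar V+\gamma),\|p\|_\infty\le1\}$, $\|\phi\|^{\bar V}=\sup_\gamma\|\phi\|^{\bar V,\gamma}$, $C^{\bar V}_{BSE}(\Gamma)=\{\phi\in C_b(\Gamma):\|\phi\|^{\bar V}<\infty\}$. $M(\Gamma)$ is the space of bounded regular complex Borel measures on $\Gamma$ with total variation norm $\|\rho\|$, and $\rho*\phi(\gamma)=\int_\Gamma\phi(\gamma-\gamma'')\,d\rho(\gamma'')$. *)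

theory Defs
  imports "HOL-Analysis.Analysis" "HOL-Probability.Probability"
begin

definition LCA_group :: "'g::{topological_ab_group_add, t2_space} itself \<Rightarrow> bool" where
  "LCA_group _ \<longleftrightarrow> locally_compact_space (euclidean :: 'g topology)"

definition chars :: "('g::topological_ab_group_add \<Rightarrow> complex) set" where
  "chars = {\<gamma>. continuous_on UNIV \<gamma> \<and> (\<forall>x. cmod (\<gamma> x) = 1)
                 \<and> (\<forall>x y. \<gamma> (x + y) = \<gamma> x * \<gamma> y)}"

definition char_add :: "('g \<Rightarrow> complex) \<Rightarrow> ('g \<Rightarrow> complex) \<Rightarrow> ('g \<Rightarrow> complex)" where
  "char_add \<gamma> \<delta> = (\<lambda>x. \<gamma> x * \<delta> x)"

definition char_diff :: "('g \<Rightarrow> complex) \<Rightarrow> ('g \<Rightarrow> complex) \<Rightarrow> ('g \<Rightarrow> complex)" where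
  "char_diff \<gamma> \<delta> = (\<lambda>x. \<gamma> x * cnj (\<delta> x))"

definition char_zero :: "'g \<Rightarrow> complex" where
  "char_zero = (\<lambda>x. 1)"

definition dual_top :: "('g::topological_ab_group_add \<Rightarrow> complex) topology" where
  "dual_top = topology_generated_by
     {{\<gamma> \<in> chars. \<gamma> ` K \<subseteq> U} | K U. compact K \<and> open U}"

text \<open>Trigonometric polynomials \<open>p = \<Sum>\<^sub>\<gamma>' p\<^sup>^(\<gamma>') \<gamma>'\<close> with frequencies in \<open>E\<close> are given by a finite
  set \<open>F \<subseteq> E\<close> and coefficients \<open>c\<close>; then \<open>p\<^sup>^ = c\<close> on \<open>F\<close> and \<open>0\<close> elsewhere.\<close>

definition bse_norm_at ::
  "('g \<Rightarrow> complex) set \<Rightarrow> ('g \<Rightarrow> complex) \<Rightarrow> (('g \<Rightarrow> complex) \<Rightarrow> complex) \<Rightarrow> ereal" where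
  "bse_norm_at W \<gamma> \<phi> =
     (SUP Fc \<in> {(F, c). finite F \<and> F \<subseteq> (\<lambda>v. char_add v \<gamma>) ` W
                      \<and> (\<forall>x. cmod (\<Sum>\<gamma>'\<in>F. c \<gamma>' * \<gamma>' x) \<le> 1)}.
        ereal (cmod (\<Sum>\<gamma>'\<in>fst Fc. snd Fc \<gamma>' * \<phi> \<gamma>')))"

definition bse_norm ::
  "('g::topological_ab_group_add \<Rightarrow> complex) set \<Rightarrow> (('g \<Rightarrow> complex) \<Rightarrow> complex) \<Rightarrow> ereal" where
  "bse_norm W \<phi> = (SUP \<gamma> \<in> chars. bse_norm_at W \<gamma> \<phi>)"

definition Cb :: "(('g::topological_ab_group_add \<Rightarrow> complex) \<Rightarrow> complex) set" where
  "Cb = {\<phi>. continuous_map dual_top euclidean \<phi> \<and> bounded (\<phi> ` chars)}"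

definition C_BSE ::
  "('g::topological_ab_group_add \<Rightarrow> complex) set \<Rightarrow> (('g \<Rightarrow> complex) \<Rightarrow> complex) set" where
  "C_BSE W = {\<phi> \<in> Cb. bse_norm W \<phi> < \<infinity>}"

definition dual_borel_sets :: "('g::topological_ab_group_add \<Rightarrow> complex) set set" where
  "dual_borel_sets = sigma_sets chars {U. openin dual_top U}"

definition dual_regular :: "('g::topological_ab_group_add \<Rightarrow> complex) measure \<Rightarrow> bool" where
  "dual_regular \<nu> \<longleftrightarrow>
     (\<forall>A \<in> sets \<nu>.
        emeasure \<nu> A = (INF U \<in> {U. openin dual_top U \<and> A \<subseteq> U}. emeasure \<nu> U) \<and>
        emeasure \<nu> A = (SUP K \<in> {K. compactin dual_top K \<and> K \<subseteq> A}. emeasure \<nu> K))"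

text \<open>A complex measure \<open>\<rho> \<in> M(\<Gamma>)\<close> is represented in polar/density form
  \<open>d\<rho> = h d\<mu>\<close>, with \<open>\<mu>\<close> a finite Borel measure on \<open>\<Gamma>\<close> and \<open>h \<in> L\<^sup>1(\<mu>)\<close>;
  then \<open>|\<rho>| = |h| \<mu>\<close>, so regularity of \<open>\<rho>\<close> is regularity of \<open>density \<mu> |h|\<close>.
  Every element of \<open>M(\<Gamma>)\<close> arises this way (take \<open>\<mu> = |\<rho>|\<close>).\<close>

definition M_dual :: "(('g::topological_ab_group_add \<Rightarrow> complex) measure \<times> (('g \<Rightarrow> complex) \<Rightarrow> complex)) set" where
  "M_dual = {(\<mu>, h). finite_measure \<mu> \<and> space \<mu> = chars \<and> sets \<mu> = dual_borel_sets
              \<and> integrable \<mu> h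
              \<and> dual_regular (density \<mu> (\<lambda>\<gamma>. ennreal (cmod (h \<gamma>))))}"

definition tv_norm :: "('a measure \<times> ('a \<Rightarrow> complex)) \<Rightarrow> real" where
  "tv_norm \<rho> = (\<integral>\<gamma>. cmod (snd \<rho> \<gamma>) \<partial>fst \<rho>)"

definition conv :: "(('g \<Rightarrow> complex) measure \<times> (('g \<Rightarrow> complex) \<Rightarrow> complex))
                     \<Rightarrow> (('g \<Rightarrow> complex) \<Rightarrow> complex) \<Rightarrow> (('g \<Rightarrow> complex) \<Rightarrow> complex)" where
  "conv \<rho> \<phi> = (\<lambda>\<gamma>. \<integral>\<gamma>''. \<phi> (char_diff \<gamma> \<gamma>'') * snd \<rho> \<gamma>'' \<partial>fst \<rho>)"

end

theory Submission
  imports Defs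
begin

text \<open>Translating a trigonometric polynomial \<open>p\<close> with frequencies in \<open>W + \<gamma>\<close> and
  \<open>\<parallel>p\<parallel>\<^sub>\<infinity> \<le> 1\<close> by a character \<open>-\<delta>\<close> gives a polynomial with frequencies in \<open>W + (\<gamma> - \<delta>)\<close>
  and the same sup norm, so \<open>|\<Sum>\<^sub>a p\<^sup>^(a) \<phi>(a - \<delta>)| \<le> \<parallel>\<phi>\<parallel>\<^sup>W\<close> for every \<open>\<delta>\<close>.
  Exchanging the finite sum with the integral defining \<open>\<rho> * \<phi>\<close> then gives
  \<open>|\<Sum>\<^sub>a p\<^sup>^(a) (\<rho> * \<phi>)(a)| \<le> \<integral> |\<Sum>\<^sub>a p\<^sup>^(a) \<phi>(a - \<delta>)| d|\<rho>|(\<delta>) \<le> \<parallel>\<phi>\<parallel>\<^sup>W \<parallel>\<rho>\<parallel>\<close>.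
  Topology enters only through measurability of \<open>\<delta> \<mapsto> \<phi>(a - \<delta>)\<close>: translation is continuous
  for the compact-open topology.\<close>

lemma topspace_dual_top: "topspace (dual_top :: ('g::topological_ab_group_add \<Rightarrow> complex) topology) = chars"
proof -
  have "chars = {\<gamma> \<in> chars. \<gamma> ` ({}::'g set) \<subseteq> UNIV}" by auto
  then have "chars \<in> {{\<gamma> \<in> chars. \<gamma> ` K \<subseteq> U} | K U. compact K \<and> open U}" by blast
  then show ?thesis unfolding dual_top_def topology_generated_by_topspace by blast
qed

lemma openin_dual_top_compact_open:
  "compact K \<Longrightarrow> open U \<Longrightarrow> openin dual_top {\<gamma> \<in> chars. \<gamma> ` K \<subseteq> U}"
  unfolding dual_top_def by (intro topology_generated_by_Basis) blast

lemma norm_char: "\<gamma> \<in> chars \<Longrightarrow> cmod (\<gamma> x) = 1"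
  unfolding chars_def by auto

lemma char_add_in_chars: "\<gamma> \<in> chars \<Longrightarrow> \<delta> \<in> chars \<Longrightarrow> char_add \<gamma> \<delta> \<in> chars"
  unfolding chars_def char_add_def by (auto intro!: continuous_intros simp: norm_mult)

lemma char_diff_in_chars: "\<gamma> \<in> chars \<Longrightarrow> \<delta> \<in> chars \<Longrightarrow> char_diff \<gamma> \<delta> \<in> chars"
  unfolding chars_def char_diff_def by (auto intro!: continuous_intros simp: norm_mult)

lemma char_zero_in_chars: "char_zero \<in> chars"
  unfolding chars_def char_zero_def by auto

lemma char_add_diff_cancel:
  assumes "\<delta> \<in> chars" shows "char_add (char_diff \<gamma> \<delta>) \<delta> = \<gamma>"
proof
  fix x
  have "cnj (\<delta> x) * \<delta> x = 1"
    using complex_norm_square[of "\<delta> x"] norm_char[OF assms] by (simp add: mult.commute)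
  then show "char_add (char_diff \<gamma> \<delta>) \<delta> x = \<gamma> x"
    unfolding char_add_def char_diff_def by (simp add: mult.assoc)
qed

lemma char_diff_char_add_assoc: "char_diff (char_add \<gamma> \<delta>) \<eta> = char_add \<gamma> (char_diff \<delta> \<eta>)"
  unfolding char_add_def char_diff_def by (simp add: mult.assoc)

lemma dual_top_nhd_uniformly_close:
  fixes \<gamma>\<^sub>0 :: "'g::topological_ab_group_add \<Rightarrow> complex"
  assumes \<gamma>\<^sub>0: "\<gamma>\<^sub>0 \<in> chars" and K: "compact K" and e: "e > 0"
  obtains N where "openin dual_top N" "\<gamma>\<^sub>0 \<in> N"
    "\<And>\<gamma> x. \<gamma> \<in> N \<Longrightarrow> x \<in> K \<Longrightarrow> dist (\<gamma> x) (\<gamma>\<^sub>0 x) < e"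
proof -
  have cont: "continuous_on UNIV \<gamma>\<^sub>0" using \<gamma>\<^sub>0 unfolding chars_def by auto
  have "K \<subseteq> (\<Union>d\<in>K. \<gamma>\<^sub>0 -` ball (\<gamma>\<^sub>0 d) (e/3))" using e by force
  moreover have "open (\<gamma>\<^sub>0 -` ball (\<gamma>\<^sub>0 d) (e/3))" for d
    using cont by (simp add: open_vimage)
  ultimately obtain D where D: "D \<subseteq> K" "finite D"
    and cover: "K \<subseteq> (\<Union>d\<in>D. \<gamma>\<^sub>0 -` ball (\<gamma>\<^sub>0 d) (e/3))"
    using compactE_image[OF K] by metis
  define K' where "K' d = K \<inter> \<gamma>\<^sub>0 -` cball (\<gamma>\<^sub>0 d) (e/3)" for d
  define N where "N = (\<Inter>d\<in>D. {\<gamma> \<in> chars. \<gamma> ` K' d \<subseteq> ball (\<gamma>\<^sub>0 d) (e/2)}) \<inter> topspace dual_top"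
  have "compact (K' d)" for d
    unfolding K'_def using K cont by (simp add: compact_Int_closed closed_vimage)
  then have "openin dual_top N"
    unfolding N_def using D(2) by (intro openin_INT openin_dual_top_compact_open) auto
  moreover have "\<gamma>\<^sub>0 \<in> N"
    unfolding N_def topspace_dual_top using \<gamma>\<^sub>0 e by (auto simp: K'_def)
  moreover have "dist (\<gamma> x) (\<gamma>\<^sub>0 x) < e" if "\<gamma> \<in> N" "x \<in> K" for \<gamma> x
  proof -
    obtain d where d: "d \<in> D" "\<gamma>\<^sub>0 x \<in> ball (\<gamma>\<^sub>0 d) (e/3)" using cover \<open>x \<in> K\<close> by blast
    then have "x \<in> K' d" unfolding K'_def using \<open>x \<in> K\<close> by auto
    then have "\<gamma> x \<in> ball (\<gamma>\<^sub>0 d) (e/2)" using \<open>\<gamma> \<in> N\<close> d(1) unfolding N_def by blast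
    then show ?thesis
      using d(2) e dist_triangle[of "\<gamma> x" "\<gamma>\<^sub>0 x" "\<gamma>\<^sub>0 d"] by (simp add: dist_commute)
  qed
  ultimately show ?thesis using that by blast
qed

lemma openin_dual_top_char_diff_vimage:
  fixes \<gamma>\<^sub>1 :: "'g::topological_ab_group_add \<Rightarrow> complex"
  assumes \<gamma>\<^sub>1: "\<gamma>\<^sub>1 \<in> chars" and K: "compact K" and U: "open U"
  shows "openin dual_top {\<gamma> \<in> chars. \<forall>x\<in>K. \<gamma>\<^sub>1 x * cnj (\<gamma> x) \<in> U}"
    (is "openin dual_top ?S")
proof (subst openin_subopen, intro ballI)
  fix \<gamma>\<^sub>0 assume "\<gamma>\<^sub>0 \<in> ?S"
  then have \<gamma>\<^sub>0: "\<gamma>\<^sub>0 \<in> chars" and sub: "(\<lambda>x. \<gamma>\<^sub>1 x * cnj (\<gamma>\<^sub>0 x)) ` K \<subseteq> U" by auto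
  have "continuous_on K \<gamma>\<^sub>0" "continuous_on K \<gamma>\<^sub>1"
    using \<gamma>\<^sub>0 \<gamma>\<^sub>1 unfolding chars_def by (auto intro: continuous_on_subset[of UNIV])
  then have "compact ((\<lambda>x. \<gamma>\<^sub>1 x * cnj (\<gamma>\<^sub>0 x)) ` K)"
    using K by (intro compact_continuous_image continuous_intros)
  then obtain e where e: "e > 0" and balls: "(\<Union>x\<in>K. ball (\<gamma>\<^sub>1 x * cnj (\<gamma>\<^sub>0 x)) e) \<subseteq> U"
    using compact_subset_open_imp_ball_epsilon_subset[OF _ U sub] by auto
  obtain N where N: "openin dual_top N" "\<gamma>\<^sub>0 \<in> N"
    and close: "\<And>\<gamma> x. \<gamma> \<in> N \<Longrightarrow> x \<in> K \<Longrightarrow> dist (\<gamma> x) (\<gamma>\<^sub>0 x) < e"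
    using dual_top_nhd_uniformly_close[OF \<gamma>\<^sub>0 K e] by blast
  have "\<gamma> \<in> ?S" if "\<gamma> \<in> N" for \<gamma>
  proof -
    have "\<gamma> \<in> chars" using openin_subset[OF N(1)] that by (auto simp: topspace_dual_top)
    moreover have "\<gamma>\<^sub>1 x * cnj (\<gamma> x) \<in> ball (\<gamma>\<^sub>1 x * cnj (\<gamma>\<^sub>0 x)) e" if "x \<in> K" for x
      using close[OF \<open>\<gamma> \<in> N\<close> that]
      by (simp add: dist_norm norm_char[OF \<gamma>\<^sub>1] norm_mult norm_minus_commute
          flip: right_diff_distrib complex_cnj_diff)
    ultimately show ?thesis using balls by blast
  qed
  with N show "\<exists>T. openin dual_top T \<and> \<gamma>\<^sub>0 \<in> T \<and> T \<subseteq> ?S" by blast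
qed

lemma continuous_map_char_diff_left:
  fixes \<gamma>\<^sub>1 :: "'g::topological_ab_group_add \<Rightarrow> complex"
  assumes \<gamma>\<^sub>1: "\<gamma>\<^sub>1 \<in> chars"
  shows "continuous_map dual_top dual_top (char_diff \<gamma>\<^sub>1)"
proof -
  let ?B = "{{\<gamma> \<in> chars. \<gamma> ` K \<subseteq> U} | K U. compact (K::'g set) \<and> open (U::complex set)}"
  have "continuous_map dual_top (topology_generated_by ?B) (char_diff \<gamma>\<^sub>1)"
  proof (rule continuous_on_generated_topo)
    fix W assume "W \<in> ?B"
    then obtain K U where KU: "compact K" "open U" "W = {\<gamma> \<in> chars. \<gamma> ` K \<subseteq> U}" by blast
    have "char_diff \<gamma>\<^sub>1 -` W \<inter> topspace dual_top = {\<gamma> \<in> chars. \<forall>x\<in>K. \<gamma>\<^sub>1 x * cnj (\<gamma> x) \<in> U}"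
      using char_diff_in_chars[OF \<gamma>\<^sub>1] unfolding KU(3) topspace_dual_top by (auto simp: char_diff_def)
    then show "openin dual_top (char_diff \<gamma>\<^sub>1 -` W \<inter> topspace dual_top)"
      using openin_dual_top_char_diff_vimage[OF \<gamma>\<^sub>1 KU(1,2)] by (simp only:)
  next
    have "chars = {\<gamma> \<in> chars. \<gamma> ` ({}::'g set) \<subseteq> UNIV}" by auto
    then show "char_diff \<gamma>\<^sub>1 ` topspace dual_top \<subseteq> \<Union> ?B"
      using char_diff_in_chars[OF \<gamma>\<^sub>1] unfolding topspace_dual_top by blast
  qed
  then show ?thesis unfolding dual_top_def .
qed

lemma borel_measurable_continuous_map_dual_top:
  fixes f :: "('g::topological_ab_group_add \<Rightarrow> complex) \<Rightarrow> complex"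
  assumes "continuous_map dual_top euclidean f" "space M = chars" "sets M = dual_borel_sets"
  shows "f \<in> borel_measurable M"
proof (rule borel_measurableI)
  fix S :: "complex set" assume "open S"
  then have "openin dual_top (f -` S \<inter> topspace dual_top)"
    using assms(1) by (simp add: continuous_map_open)
  then show "f -` S \<inter> space M \<in> sets M"
    unfolding assms(2,3) dual_borel_sets_def topspace_dual_top by (auto intro: sigma_sets.Basic)
qed

lemma integrable_conv_integrand:
  fixes \<gamma> :: "'g::topological_ab_group_add \<Rightarrow> complex"
  assumes \<gamma>: "\<gamma> \<in> chars" and \<phi>: "\<phi> \<in> Cb" and \<rho>: "(\<mu>, h) \<in> M_dual"
  shows "integrable \<mu> (\<lambda>\<delta>. \<phi> (char_diff \<gamma> \<delta>) * h \<delta>)"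
proof -
  have space: "space \<mu> = chars" "sets \<mu> = dual_borel_sets" and h: "integrable \<mu> h"
    using \<rho> unfolding M_dual_def by auto
  obtain B where B: "\<And>\<delta>. \<delta> \<in> chars \<Longrightarrow> cmod (\<phi> \<delta>) \<le> B"
    using \<phi> unfolding Cb_def bounded_iff by auto
  have "continuous_map dual_top euclidean (\<phi> \<circ> char_diff \<gamma>)"
    using continuous_map_compose[OF continuous_map_char_diff_left[OF \<gamma>]] \<phi> unfolding Cb_def by blast
  then have "(\<lambda>\<delta>. \<phi> (char_diff \<gamma> \<delta>)) \<in> borel_measurable \<mu>"
    using borel_measurable_continuous_map_dual_top space by (simp add: o_def)
  then have measurable: "(\<lambda>\<delta>. \<phi> (char_diff \<gamma> \<delta>) * h \<delta>) \<in> borel_measurable \<mu>"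
    using borel_measurable_integrable[OF h] by measurable
  have "norm (\<phi> (char_diff \<gamma> \<delta>) * h \<delta>) \<le> norm (complex_of_real B * h \<delta>)" if "\<delta> \<in> space \<mu>" for \<delta>
  proof -
    have "cmod (\<phi> (char_diff \<gamma> \<delta>)) \<le> B" using B char_diff_in_chars[OF \<gamma>] space that by auto
    then show ?thesis by (simp add: norm_mult mult_right_mono)
  qed
  then have "AE \<delta> in \<mu>. norm (\<phi> (char_diff \<gamma> \<delta>) * h \<delta>) \<le> norm (complex_of_real B * h \<delta>)"
    by (rule AE_I2)
  moreover have "integrable \<mu> (\<lambda>\<delta>. complex_of_real B * h \<delta>)" using h by simp
  ultimately show ?thesis using measurable Bochner_Integration.integrable_bound by blast
qed

definition unit_trig_polys ::
  "('g \<Rightarrow> complex) set \<Rightarrow> ('g \<Rightarrow> complex)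
     \<Rightarrow> (('g \<Rightarrow> complex) set \<times> (('g \<Rightarrow> complex) \<Rightarrow> complex)) set" where
  "unit_trig_polys W \<gamma> = {(F, c). finite F \<and> F \<subseteq> (\<lambda>v. char_add v \<gamma>) ` W
                             \<and> (\<forall>x. cmod (\<Sum>\<gamma>'\<in>F. c \<gamma>' * \<gamma>' x) \<le> 1)}"

lemma pairing_le_bse_norm_at:
  "(F, c) \<in> unit_trig_polys W \<gamma> \<Longrightarrow> ereal (cmod (\<Sum>a\<in>F. c a * \<phi> a)) \<le> bse_norm_at W \<gamma> \<phi>"
  unfolding bse_norm_at_def by (rule SUP_upper2[where i = "(F, c)"]) (auto simp: unit_trig_polys_def)

lemma bse_norm_at_le_bse_norm: "\<gamma> \<in> chars \<Longrightarrow> bse_norm_at W \<gamma> \<phi> \<le> bse_norm W \<phi>"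
  unfolding bse_norm_def by (rule SUP_upper)

lemma bse_norm_leI:
  assumes "\<And>\<gamma> F c. \<gamma> \<in> chars \<Longrightarrow> (F, c) \<in> unit_trig_polys W \<gamma>
             \<Longrightarrow> ereal (cmod (\<Sum>a\<in>F. c a * \<phi> a)) \<le> B"
  shows "bse_norm W \<phi> \<le> B"
  unfolding bse_norm_def bse_norm_at_def
  by (intro SUP_least) (auto intro: assms simp: unit_trig_polys_def)

lemma bse_norm_nonneg: "0 \<le> bse_norm W \<phi>"
proof -
  have "ereal 0 \<le> bse_norm_at W char_zero \<phi>"
    using pairing_le_bse_norm_at[of "{}" "\<lambda>_. 0" W char_zero \<phi>] by (simp add: unit_trig_polys_def)
  then have "0 \<le> bse_norm_at W char_zero \<phi>" by (simp add: zero_ereal_def)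
  also have "\<dots> \<le> bse_norm W \<phi>" by (rule bse_norm_at_le_bse_norm[OF char_zero_in_chars])
  finally show ?thesis .
qed

lemma inj_on_char_diff_right: "\<delta> \<in> chars \<Longrightarrow> inj_on (\<lambda>\<gamma>. char_diff \<gamma> \<delta>) A"
  by (metis (no_types, lifting) char_add_diff_cancel inj_onI)

lemma unit_trig_polys_translate:
  assumes p: "(F, c) \<in> unit_trig_polys W \<gamma>" and \<delta>: "\<delta> \<in> chars"
  shows "((\<lambda>a. char_diff a \<delta>) ` F, \<lambda>a. c (char_add a \<delta>)) \<in> unit_trig_polys W (char_diff \<gamma> \<delta>)"
proof -
  have F: "finite F" "F \<subseteq> (\<lambda>v. char_add v \<gamma>) ` W" and bound: "\<And>x. cmod (\<Sum>a\<in>F. c a * a x) \<le> 1"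
    using p unfolding unit_trig_polys_def by auto
  have "(\<lambda>a. char_diff a \<delta>) ` F \<subseteq> (\<lambda>v. char_add v (char_diff \<gamma> \<delta>)) ` W"
    using F(2) by (auto simp: char_diff_char_add_assoc)
  moreover have "cmod (\<Sum>b\<in>(\<lambda>a. char_diff a \<delta>) ` F. c (char_add b \<delta>) * b x) \<le> 1" for x
  proof -
    have "(\<Sum>b\<in>(\<lambda>a. char_diff a \<delta>) ` F. c (char_add b \<delta>) * b x) = (\<Sum>a\<in>F. c a * char_diff a \<delta> x)"
      by (simp add: sum.reindex[OF inj_on_char_diff_right[OF \<delta>]] char_add_diff_cancel[OF \<delta>])
    also have "\<dots> = (\<Sum>a\<in>F. c a * a x) * cnj (\<delta> x)"
      by (simp add: char_diff_def sum_distrib_right mult.assoc)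
    finally show ?thesis using bound[of x] by (simp add: norm_mult norm_char[OF \<delta>])
  qed
  ultimately show ?thesis using F(1) unfolding unit_trig_polys_def by auto
qed

lemma translated_pairing_le_bse_norm:
  assumes "\<gamma> \<in> chars" "\<delta> \<in> chars" "(F, c) \<in> unit_trig_polys W \<gamma>"
  shows "ereal (cmod (\<Sum>a\<in>F. c a * \<phi> (char_diff a \<delta>))) \<le> bse_norm W \<phi>"
proof -
  have "(\<Sum>a\<in>F. c a * \<phi> (char_diff a \<delta>))
      = (\<Sum>b\<in>(\<lambda>a. char_diff a \<delta>) ` F. c (char_add b \<delta>) * \<phi> b)"
    by (simp add: sum.reindex[OF inj_on_char_diff_right[OF assms(2)]] char_add_diff_cancel[OF assms(2)])
  also have "ereal (cmod \<dots>) \<le> bse_norm_at W (char_diff \<gamma> \<delta>) \<phi>"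
    by (rule pairing_le_bse_norm_at[OF unit_trig_polys_translate[OF assms(3,2)]])
  also have "\<dots> \<le> bse_norm W \<phi>"
    by (rule bse_norm_at_le_bse_norm[OF char_diff_in_chars[OF assms(1,2)]])
  finally show ?thesis .
qed

lemma sum_mult_conv_eq_integral:
  fixes \<phi> :: "('g::topological_ab_group_add \<Rightarrow> complex) \<Rightarrow> complex"
  assumes \<rho>: "(\<mu>, h) \<in> M_dual" and \<phi>: "\<phi> \<in> Cb" and F: "F \<subseteq> chars"
  shows "(\<Sum>a\<in>F. c a * conv (\<mu>, h) \<phi> a) = (\<integral>\<delta>. (\<Sum>a\<in>F. c a * \<phi> (char_diff a \<delta>)) * h \<delta> \<partial>\<mu>)"
proof -
  have "(\<Sum>a\<in>F. c a * conv (\<mu>, h) \<phi> a) = (\<Sum>a\<in>F. \<integral>\<delta>. c a * (\<phi> (char_diff a \<delta>) * h \<delta>) \<partial>\<mu>)"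
    unfolding conv_def by simp
  also have "\<dots> = (\<integral>\<delta>. (\<Sum>a\<in>F. c a * (\<phi> (char_diff a \<delta>) * h \<delta>)) \<partial>\<mu>)"
    using integrable_conv_integrand[OF _ \<phi> \<rho>] F by (subst Bochner_Integration.integral_sum) auto
  finally show ?thesis by (simp add: sum_distrib_right mult.assoc)
qed

lemma bse_norm_conv_le:
  fixes W :: "('g::topological_ab_group_add \<Rightarrow> complex) set"
  assumes W: "W \<subseteq> chars" and \<phi>: "\<phi> \<in> C_BSE W" and \<rho>: "\<rho> \<in> M_dual"
  shows "bse_norm W (conv \<rho> \<phi>) \<le> bse_norm W \<phi> * ereal (tv_norm \<rho>)"
proof -
  obtain \<mu> h where \<rho>_eq: "\<rho> = (\<mu>, h)" by (cases \<rho>)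
  have \<mu>h: "(\<mu>, h) \<in> M_dual" using \<rho> \<rho>_eq by simp
  then have space: "space \<mu> = chars" and h: "integrable \<mu> h" unfolding M_dual_def by auto
  have \<phi>_Cb: "\<phi> \<in> Cb" using \<phi> unfolding C_BSE_def by auto
  obtain b where b: "bse_norm W \<phi> = ereal b"
    using \<phi> bse_norm_nonneg[of W \<phi>] unfolding C_BSE_def by (cases "bse_norm W \<phi>") auto
  have b_nonneg: "0 \<le> b" using bse_norm_nonneg[of W \<phi>] b by simp
  have "ereal (cmod (\<Sum>a\<in>F. c a * conv \<rho> \<phi> a)) \<le> ereal (b * tv_norm \<rho>)"
    if \<gamma>: "\<gamma> \<in> chars" and p: "(F, c) \<in> unit_trig_polys W \<gamma>" for \<gamma> F c
  proof -
    have "F \<subseteq> chars"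
      using p W char_add_in_chars[OF _ \<gamma>] unfolding unit_trig_polys_def by blast
    note conv_eq = sum_mult_conv_eq_integral[OF \<mu>h \<phi>_Cb this]
    have "cmod (\<Sum>a\<in>F. c a * conv \<rho> \<phi> a)
        \<le> (\<integral>\<delta>. cmod ((\<Sum>a\<in>F. c a * \<phi> (char_diff a \<delta>)) * h \<delta>) \<partial>\<mu>)"
      unfolding \<rho>_eq conv_eq by (rule integral_norm_bound)
    also have "\<dots> \<le> (\<integral>\<delta>. b * cmod (h \<delta>) \<partial>\<mu>)"
    proof (rule integral_mono')
      show "integrable \<mu> (\<lambda>\<delta>. b * cmod (h \<delta>))" using h by simp
      fix \<delta> assume "\<delta> \<in> space \<mu>"
      show "0 \<le> b * cmod (h \<delta>)" using b_nonneg by simp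
      have "ereal (cmod (\<Sum>a\<in>F. c a * \<phi> (char_diff a \<delta>))) \<le> ereal b"
        using translated_pairing_le_bse_norm[OF \<gamma> _ p] \<open>\<delta> \<in> space \<mu>\<close> space b by metis
      then show "cmod ((\<Sum>a\<in>F. c a * \<phi> (char_diff a \<delta>)) * h \<delta>) \<le> b * cmod (h \<delta>)"
        by (simp add: norm_mult mult_right_mono)
    qed
    also have "\<dots> = b * tv_norm \<rho>" unfolding tv_norm_def \<rho>_eq by simp
    finally show ?thesis by simp
  qed
  then have "bse_norm W (conv \<rho> \<phi>) \<le> ereal (b * tv_norm \<rho>)" by (rule bse_norm_leI)
  then show ?thesis using b by simp
qed

theorem lemma7p3:
  fixes V :: "('g::{topological_ab_group_add, t2_space} \<Rightarrow> complex) set"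
  assumes "LCA_group TYPE('g)"
    and "\<not> (\<forall>U::'g set. open U)"
    and "openin dual_top V" and "char_zero \<in> V"
    and "compactin dual_top (dual_top closure_of V)"
  shows "\<forall>\<phi> \<in> C_BSE (dual_top closure_of V). \<forall>\<rho> \<in> M_dual.
           bse_norm (dual_top closure_of V) (conv \<rho> \<phi>)
             \<le> bse_norm (dual_top closure_of V) \<phi> * ereal (tv_norm \<rho>)"
proof -
  have "dual_top closure_of V \<subseteq> chars"
    using closure_of_subset_topspace topspace_dual_top by metis
  then show ?thesis using bse_norm_conv_le by blast
qed

end
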